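(* Let $\mathcal{G}$ be a hypergraph with at least one edge. Then $|\lambda_{\min}(A_{\mathcal{G}})|\ge 1/(r(\mathcal{G})-1)$, where $\lambda_{\min}(A_{\mathcal{G}})$ is the smallest eigenvalue of $A_{\mathcal{G}}$.
   Context: A hypergraph $\mathcal{G}=(V,E)$ has a finite vertex set $V$ and a set $E$ of subsets of $V$ (edges), each of cardinality at least $2$. The rank $r(\mathcal{G})$ is the maximum cardinality of an edge. The adjacency matrix $A_{\mathcal{G}}$ has $(A_{\mathcal{G}})_{ij}=\sum_{e\in E,\, i,j\in e}\frac{1}{|e|-1}$ for $i\ne j$ and zero diagonal. *)

theory Defs
  imports "HOL-Analysis.Analysis"
begin

text \<open>A hypergraph on the finite vertex type 'n (vertex set V = UNIV):
  a set E of edges, each a subset of V of cardinality at least 2.\<close>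
definition hypergraph :: "'n::finite set set \<Rightarrow> bool" where
  "hypergraph E \<longleftrightarrow> (\<forall>e\<in>E. card e \<ge> 2)"

definition hrank :: "'n::finite set set \<Rightarrow> nat" where
  "hrank E = Max (card ` E)"

definition hadj :: "'n::finite set set \<Rightarrow> real^'n^'n" where
  "hadj E = (\<chi> i j. if i = j then 0
      else (\<Sum>e\<in>{e\<in>E. i \<in> e \<and> j \<in> e}. 1 / (real (card e) - 1)))"

definition eigenvalues :: "real^'n^'n \<Rightarrow> real set" where
  "eigenvalues A = {l. \<exists>v. v \<noteq> 0 \<and> A *v v = l *\<^sub>R v}"

definition lambda_min :: "real^'n^'n \<Rightarrow> real" where
  "lambda_min A = Min (eigenvalues A)"

end

theory Submission
  imports Defs
begin

text \<open>The smallest eigenvalue of a real symmetric matrix is the minimum of its Rayleigh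
  quotient. The adjacency matrix of a hypergraph is symmetric with zero diagonal, so testing
  the Rayleigh quotient on \<open>e\<^sub>i - e\<^sub>j\<close>, for two vertices \<open>i \<noteq> j\<close> of a common edge \<open>e\<close>, gives
  \<open>\<lambda>\<^sub>m\<^sub>i\<^sub>n \<le> -A\<^sub>i\<^sub>j \<le> -1/(|e| - 1) \<le> -1/(r - 1)\<close>.\<close>

lemma symmetric_matrix_inner_commute:
  fixes A :: "real^'n^'n"
  assumes "transpose A = A"
  shows "x \<bullet> (A *v y) = y \<bullet> (A *v x)"
proof -
  have "x \<bullet> (A *v y) = (x v* A) \<bullet> y" by (simp add: dot_lmul_matrix)
  also have "x v* A = A *v x" using vector_transpose_matrix[of x A] assms by simp
  finally show ?thesis by (simp add: inner_commute)
qed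

lemma psd_symmetric_matrix_null_vector:
  fixes B :: "real^'n^'n"
  assumes sym: "transpose B = B"
    and psd: "\<And>y. 0 \<le> y \<bullet> (B *v y)"
    and null: "x \<bullet> (B *v x) = 0"
  shows "B *v x = 0"
proof -
  define z where "z = B *v x"
  define b where "b = z \<bullet> (B *v z)"
  have quad: "0 \<le> 2 * t * (z \<bullet> z) + t\<^sup>2 * b" for t
  proof -
    have "0 \<le> (x + t *\<^sub>R z) \<bullet> (B *v (x + t *\<^sub>R z))" by (rule psd)
    also have "\<dots> = x \<bullet> (B *v x) + t * (x \<bullet> (B *v z)) + t * (z \<bullet> z) + t\<^sup>2 * b"
      by (simp add: b_def z_def matrix_vector_right_distrib inner_add_left inner_add_right
          power2_eq_square algebra_simps flip: scaleR_matrix_vector_assoc)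
    also have "x \<bullet> (B *v z) = z \<bullet> z"
      using symmetric_matrix_inner_commute[OF sym, of x z] by (simp add: z_def)
    finally show ?thesis using null by simp
  qed
  show ?thesis
  proof (rule ccontr)
    assume "B *v x \<noteq> 0"
    then have a: "z \<bullet> z > 0" by (simp add: z_def)
    \<comment> \<open>a small negative \<open>t\<close> makes the linear term dominate\<close>
    define t where "t = - (z \<bullet> z) / (\<bar>b\<bar> + 1)"
    have "2 * t * (z \<bullet> z) + t\<^sup>2 * b \<le> 2 * t * (z \<bullet> z) + t\<^sup>2 * (\<bar>b\<bar> + 1)"
      by (intro add_left_mono mult_left_mono) auto
    also have "\<dots> = t * (z \<bullet> z)"
      by (simp add: t_def power2_eq_square)
    also have "\<dots> < 0" using a by (simp add: t_def mult_neg_pos add_pos_nonneg)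
    finally show False using quad[of t] by simp
  qed
qed

lemma quadratic_form_attains_min_on_sphere:
  fixes A :: "real^'n^'n"
  obtains x where "norm x = 1" and "\<And>y. (x \<bullet> (A *v x)) * (y \<bullet> y) \<le> y \<bullet> (A *v y)"
proof -
  let ?q = "\<lambda>x::real^'n. x \<bullet> (A *v x)"
  have cont: "continuous_on (sphere 0 1) ?q"
    by (intro continuous_intros)
  obtain x where x: "x \<in> sphere (0::real^'n) 1"
    and min: "\<And>y. y \<in> sphere 0 1 \<Longrightarrow> ?q x \<le> ?q y"
    using continuous_attains_inf[OF compact_sphere _ cont] by auto
  have "?q x * (y \<bullet> y) \<le> ?q y" for y
  proof (cases "y = 0")
    case False
    define u where "u = (1 / norm y) *\<^sub>R y"
    have "u \<in> sphere 0 1" using False by (simp add: u_def)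
    then have "?q x \<le> ?q u" by (rule min)
    also have "?q u = ?q y / (norm y)\<^sup>2"
      by (simp add: u_def matrix_vector_mult_scaleR power2_eq_square)
    finally have "?q x * (norm y)\<^sup>2 \<le> ?q y" using False by (simp add: pos_le_divide_eq)
    then show ?thesis by (simp add: power2_norm_eq_inner)
  qed simp
  with x that show ?thesis by simp
qed

lemma symmetric_matrix_rayleigh_eigenvector:
  fixes A :: "real^'n^'n"
  assumes sym: "transpose A = A"
  obtains \<mu> x where "x \<noteq> 0" and "A *v x = \<mu> *\<^sub>R x" and "\<And>y. \<mu> * (y \<bullet> y) \<le> y \<bullet> (A *v y)"
proof -
  obtain x where x: "norm x = 1" and min: "\<And>y. (x \<bullet> (A *v x)) * (y \<bullet> y) \<le> y \<bullet> (A *v y)"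
    using quadratic_form_attains_min_on_sphere by blast
  define \<mu> where "\<mu> = x \<bullet> (A *v x)"
  define B where "B = A - \<mu> *\<^sub>R mat 1"
  have B_mult: "B *v y = A *v y - \<mu> *\<^sub>R y" for y
    by (simp add: B_def matrix_vector_mult_diff_rdistrib flip: scaleR_matrix_vector_assoc)
  have "transpose B = B"
    using sym by (simp add: B_def transpose_def vec_eq_iff mat_def)
  moreover have "0 \<le> y \<bullet> (B *v y)" for y
    using min[of y] by (simp add: B_mult inner_diff_right \<mu>_def)
  moreover have "x \<bullet> (B *v x) = 0"
    using x by (simp add: B_mult inner_diff_right \<mu>_def flip: power2_norm_eq_inner)
  ultimately have "B *v x = 0" by (rule psd_symmetric_matrix_null_vector)
  then have "A *v x = \<mu> *\<^sub>R x" by (simp add: B_mult)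
  moreover have "x \<noteq> 0" using x by auto
  ultimately show ?thesis using that min unfolding \<mu>_def by blast
qed

lemma finite_eigenvalues_symmetric_matrix:
  fixes A :: "real^'n^'n"
  assumes sym: "transpose A = A"
  shows "finite (eigenvalues A)"
proof -
  define v where "v = (\<lambda>l. SOME v. v \<noteq> 0 \<and> A *v v = l *\<^sub>R v)"
  have v: "v l \<noteq> 0 \<and> A *v v l = l *\<^sub>R v l" if "l \<in> eigenvalues A" for l
    using that unfolding eigenvalues_def v_def by (metis (mono_tags, lifting) someI_ex mem_Collect_eq)
  have orth: "v l \<bullet> v m = 0" if "l \<in> eigenvalues A" "m \<in> eigenvalues A" "l \<noteq> m" for l m
  proof -
    have "v l \<bullet> (A *v v m) = v m \<bullet> (A *v v l)" by (rule symmetric_matrix_inner_commute[OF sym])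
    then have "m * (v l \<bullet> v m) = l * (v l \<bullet> v m)"
      using v[OF that(1)] v[OF that(2)] by (simp add: inner_commute)
    then show ?thesis using that(3) by simp
  qed
  have "inj_on v (eigenvalues A)"
    by (rule inj_onI) (metis orth v inner_eq_zero_iff)
  moreover have "independent (v ` eigenvalues A)"
    by (rule pairwise_orthogonal_independent)
      (use orth v in \<open>fastforce simp: pairwise_def orthogonal_def\<close>)+
  ultimately show ?thesis
    using independent_imp_finite finite_imageD by blast
qed

lemma lambda_min_le_rayleigh:
  fixes A :: "real^'n^'n"
  assumes sym: "transpose A = A"
  shows "lambda_min A * (y \<bullet> y) \<le> y \<bullet> (A *v y)"
proof -
  obtain \<mu> x where x: "x \<noteq> 0" "A *v x = \<mu> *\<^sub>R x"
    and min: "\<And>y. \<mu> * (y \<bullet> y) \<le> y \<bullet> (A *v y)"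
    using symmetric_matrix_rayleigh_eigenvector[OF sym] by metis
  from x have mem: "\<mu> \<in> eigenvalues A" unfolding eigenvalues_def by blast
  have lower: "\<mu> \<le> l" if "l \<in> eigenvalues A" for l
  proof -
    have "\<exists>w. w \<noteq> 0 \<and> A *v w = l *\<^sub>R w" using that by (simp add: eigenvalues_def)
    then obtain w where w: "w \<noteq> 0" "A *v w = l *\<^sub>R w" by blast
    have "w \<bullet> (A *v w) = l * (w \<bullet> w)" using w(2) by simp
    then have "\<mu> * (w \<bullet> w) \<le> l * (w \<bullet> w)" using min[of w] by linarith
    moreover have "0 < w \<bullet> w" using w(1) by simp
    ultimately show ?thesis by (rule mult_right_le_imp_le)
  qed
  have lambda_min_eq: "lambda_min A = \<mu>"
    unfolding lambda_min_def
    by (rule Min_eqI[OF finite_eigenvalues_symmetric_matrix[OF sym]]) (use lower mem in auto)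
  show ?thesis unfolding lambda_min_eq by (rule min)
qed

lemma lambda_min_le_neg_offdiagonal:
  fixes A :: "real^'n^'n"
  assumes sym: "transpose A = A"
    and diag: "\<And>k. A $ k $ k = 0"
    and "i \<noteq> j"
  shows "lambda_min A \<le> - A $ i $ j"
proof -
  define y :: "real^'n" where "y = axis i 1 - axis j 1"
  have yy: "y \<bullet> y = 2"
    using \<open>i \<noteq> j\<close> by (simp add: y_def inner_diff_left inner_diff_right inner_axis_axis)
  have yAy: "y \<bullet> (A *v y) = A $ i $ i - A $ i $ j - (A $ j $ i - A $ j $ j)"
    unfolding y_def matrix_vector_mult_diff_distrib matrix_vector_mult_basis
      inner_diff_left inner_diff_right inner_axis' by (simp add: column_def)
  have "A $ j $ i = A $ i $ j"
    using arg_cong[OF sym, of "\<lambda>M. M $ i $ j"] by (simp add: transpose_def)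
  with lambda_min_le_rayleigh[OF sym, of y] show ?thesis
    unfolding yy yAy using diag[of i] diag[of j] by linarith
qed

lemma transpose_hadj: "transpose (hadj E) = hadj E"
proof -
  have "{e \<in> E. j \<in> e \<and> i \<in> e} = {e \<in> E. i \<in> e \<and> j \<in> e}" for i j by blast
  then show ?thesis by (simp add: transpose_def hadj_def vec_eq_iff eq_commute)
qed

lemma hadj_diagonal: "hadj E $ k $ k = 0"
  by (simp add: hadj_def)

lemma hadj_ge_edge:
  assumes "hypergraph E" and "e \<in> E" and "i \<in> e" "j \<in> e" "i \<noteq> j"
  shows "1 / (real (card e) - 1) \<le> hadj E $ i $ j"
proof -
  let ?w = "\<lambda>f::'a set. 1 / (real (card f) - 1)"
  have "?w f \<ge> 0" if "f \<in> E" for f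
    using assms(1) that unfolding hypergraph_def by fastforce
  then have "?w e \<le> (\<Sum>f\<in>{f\<in>E. i \<in> f \<and> j \<in> f}. ?w f)"
    using assms(2-4) by (intro member_le_sum) auto
  then show ?thesis using \<open>i \<noteq> j\<close> by (simp add: hadj_def)
qed

lemma hypergraph_edge_two_vertices:
  assumes "hypergraph E" and "e \<in> E"
  obtains i j where "i \<in> e" "j \<in> e" "i \<noteq> j"
proof -
  have e2: "2 \<le> card e" using assms unfolding hypergraph_def by blast
  then obtain i where i: "i \<in> e" by fastforce
  have "0 < card (e - {i})" using e2 i by (simp add: card_Diff_singleton)
  then obtain j where "j \<in> e - {i}" by (auto simp: card_gt_0_iff)
  with i that show ?thesis by blast
qed

lemma card_le_hrank: "e \<in> E \<Longrightarrow> card e \<le> hrank E"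
  unfolding hrank_def by (intro Max_ge) auto

theorem corollary2:
  fixes E :: "'n::finite set set"
  assumes "hypergraph E"
    and "E \<noteq> {}"
  shows "\<bar>lambda_min (hadj E)\<bar> \<ge> 1 / (real (hrank E) - 1)"
proof -
  obtain e where e: "e \<in> E" using assms(2) by blast
  obtain i j where ij: "i \<in> e" "j \<in> e" "i \<noteq> j"
    using hypergraph_edge_two_vertices[OF assms(1) e] .
  have "2 \<le> card e" using assms(1) e unfolding hypergraph_def by blast
  then have "1 / (real (hrank E) - 1) \<le> 1 / (real (card e) - 1)"
    using card_le_hrank[OF e] by (intro divide_left_mono) auto
  also have "\<dots> \<le> hadj E $ i $ j"
    using hadj_ge_edge[OF assms(1) e ij] .
  also have "\<dots> \<le> - lambda_min (hadj E)"
    using lambda_min_le_neg_offdiagonal[OF transpose_hadj[of E] hadj_diagonal \<open>i \<noteq> j\<close>] by simp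
  finally show ?thesis by simp
qed

end
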